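(* (Quantitative subject reduction.) If $\Gamma\vdash^{n_1} t_1:\sigma$ is derivable in $\cap J$ and $t_1\to_{d\beta}t_2$ is a non-erasing step, then $\Gamma\vdash^{n_2}t_2:\sigma$ is derivable in $\cap J$ for some $n_2<n_1$.
   Context: Terms $\mathtt T_J$: $t,u,r ::= x \mid \lambda x.t \mid t(u,y.r)$ ($y$ bound in $r$), up to $\alpha$-equivalence; $\{u/x\}t$ capture-avoiding substitution. List contexts $\mathtt D ::= \Diamond \mid t(u,y.\mathtt D)$. Distant beta: $\mathtt D\langle\lambda x.t\rangle(u,y.r) \mapsto_{d\beta} \{\{u/x\}\mathtt D\langle t\rangle/y\}r$ (variables bound by $\mathtt D$ not free in $u$, $x$ not in $\mathtt D$), $\to_{d\beta}$ its closure under all contexts. A step is non-erasing if the contracted redex $\mathtt D\langle\lambda x.t\rangle(u,y.r)$ satisfies $x\in\mathrm{fv}(t)$ and $y\in\mathrm{fv}(r)$. System $\cap J$: types $\sigma,\tau ::= \alpha \mid \mathcal M\to\sigma$, $\mathcal M=[\sigma_i]_{i\in I}$ a finite possibly empty multiset; $\sqcup$ multiset union; environments map variables to multisets, $\wedge$ pointwise union, $\Gamma;x:\mathcal M$ extension with $x\notin\mathrm{dom}\,\Gamma$. $\mathrm{ch}(\mathcal M)=\mathcal M$ if $\mathcal M\ne[\,]$, $\mathrm{ch}([\,])=[\tau]$ for an arbitrary $\tau$. Rules: (var) $x:[\sigma]\vdash x:\sigma$; (abs) from $\Gamma;x:\mathcal M\vdash t:\sigma$ infer $\Gamma\vdash\lambda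 x.t:\mathcal M\to\sigma$; (many) from $(\Gamma_i\vdash t:\sigma_i)_{i\in I}$, $I\ne\emptyset$, infer $\wedge_i\Gamma_i\vdash t:[\sigma_i]_{i\in I}$; (app) from $\Gamma\vdash t:\mathrm{ch}([\mathcal M_i\to\tau_i]_{i\in I})$, $\Delta\vdash u:\mathrm{ch}(\sqcup_i\mathcal M_i)$, $\Lambda;y:[\tau_i]_{i\in I}\vdash r:\sigma$ infer $\Gamma\wedge\Delta\wedge\Lambda\vdash t(u,y.r):\sigma$. $\vdash^n$ indicates a derivation of size $n$ = number of rule instances other than (many). *)

theory Defs
  imports Main "HOL-Library.Multiset"
begin

text \<open>Terms up to alpha-equivalence are represented with de Bruijn indices.
  \<open>Lam t\<close> binds index 0 in t; \<open>App t u r\<close> represents t(u, y.r), where y is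
  bound (as index 0) in r only.\<close>

datatype trm = Var nat | Lam trm | App trm trm trm

fun shift :: "nat \<Rightarrow> nat \<Rightarrow> trm \<Rightarrow> trm" where
  "shift d c (Var i) = Var (if i < c then i else i + d)"
| "shift d c (Lam t) = Lam (shift d (Suc c) t)"
| "shift d c (App t u r) = App (shift d c t) (shift d c u) (shift d (Suc c) r)"

fun subst :: "trm \<Rightarrow> nat \<Rightarrow> trm \<Rightarrow> trm" where
  "subst (Var i) k s = (if i < k then Var i else if i = k then s else Var (i - 1))"
| "subst (Lam t) k s = Lam (subst t (Suc k) (shift 1 0 s))"
| "subst (App t u r) k s = App (subst t k s) (subst u k s) (subst r (Suc k) (shift 1 0 s))"

fun loose :: "nat \<Rightarrow> trm \<Rightarrow> bool" where
  "loose k (Var i) = (i = k)"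
| "loose k (Lam t) = loose (Suc k) t"
| "loose k (App t u r) = (loose k t \<or> loose k u \<or> loose (Suc k) r)"

text \<open>List contexts D ::= Hole | t(u, y.D).\<close>
datatype lctx = Hole | DApp trm trm lctx

fun plug :: "lctx \<Rightarrow> trm \<Rightarrow> trm" where
  "plug Hole s = s"
| "plug (DApp t u D) s = App t u (plug D s)"

fun depth :: "lctx \<Rightarrow> nat" where
  "depth Hole = 0"
| "depth (DApp t u D) = Suc (depth D)"

text \<open>Root: D<lam x.t>(u, y.r) -> {{u/x}D<t>/y}r with x free in t and y free in r.
  In de Bruijn form u must be shifted past the depth(D) binders of D.\<close>
inductive ne_step :: "trm \<Rightarrow> trm \<Rightarrow> bool" where
  root: "loose 0 t \<Longrightarrow> loose 0 r \<Longrightarrow>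
     ne_step (App (plug D (Lam t)) u r)
             (subst r 0 (plug D (subst t 0 (shift (depth D) 0 u))))"
| lam: "ne_step t t' \<Longrightarrow> ne_step (Lam t) (Lam t')"
| app1: "ne_step t t' \<Longrightarrow> ne_step (App t u r) (App t' u r)"
| app2: "ne_step u u' \<Longrightarrow> ne_step (App t u r) (App t u' r)"
| app3: "ne_step r r' \<Longrightarrow> ne_step (App t u r) (App t u r')"

datatype ty = TAtom nat | Arr "ty multiset" ty

type_synonym env = "nat \<Rightarrow> ty multiset"

definition env_union :: "env \<Rightarrow> env \<Rightarrow> env" (infixl "\<and>\<^sub>e" 70) where
  "env_union G D = (\<lambda>i. G i + D i)"

definition env_sum :: "env list \<Rightarrow> env" where
  "env_sum Gs = (\<lambda>i. sum_list (map (\<lambda>G. G i) Gs))"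

definition env_cons :: "ty multiset \<Rightarrow> env \<Rightarrow> env" where
  "env_cons M G = (\<lambda>i. case i of 0 \<Rightarrow> M | Suc j \<Rightarrow> G j)"

definition env_single :: "nat \<Rightarrow> ty \<Rightarrow> env" where
  "env_single x s = (\<lambda>i. if i = x then {#s#} else {#})"

text \<open>\<open>ch M M'\<close>: M' is a possible value of ch(M).\<close>
definition ch :: "ty multiset \<Rightarrow> ty multiset \<Rightarrow> bool" where
  "ch M M' \<longleftrightarrow> (M \<noteq> {#} \<and> M' = M) \<or> (M = {#} \<and> (\<exists>\<tau>. M' = {#\<tau>#}))"

text \<open>\<open>has_ty G t s n\<close>: G |-^n t : s; \<open>has_mty G t M n\<close>: G |-^n t : M (via many).
  Sizes count all rule instances except (many).\<close>
inductive has_ty :: "env \<Rightarrow> trm \<Rightarrow> ty \<Rightarrow> nat \<Rightarrow> bool"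
  and has_mty :: "env \<Rightarrow> trm \<Rightarrow> ty multiset \<Rightarrow> nat \<Rightarrow> bool" where
  var: "has_ty (env_single x s) (Var x) s 1"
| abs: "has_ty (env_cons M G) t s n \<Longrightarrow> has_ty G (Lam t) (Arr M s) (Suc n)"
| many: "xs \<noteq> [] \<Longrightarrow> (\<forall>i<length xs. has_ty (fst (xs ! i)) t (fst (snd (xs ! i))) (snd (snd (xs ! i))))
     \<Longrightarrow> has_mty (env_sum (map fst xs)) t (mset (map (\<lambda>x. fst (snd x)) xs))
              (sum_list (map (\<lambda>x. snd (snd x)) xs))"
| app: "ch (mset (map (\<lambda>p. Arr (fst p) (snd p)) ps)) A \<Longrightarrow> has_mty G t A n1 \<Longrightarrow>
        ch (sum_list (map fst ps)) B \<Longrightarrow> has_mty D u B n2 \<Longrightarrow>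
        has_ty (env_cons (mset (map snd ps)) L) r s n3 \<Longrightarrow>
        has_ty (G \<and>\<^sub>e D \<and>\<^sub>e L) (App t u r) s (Suc (n1 + n2 + n3))"

end

theory Submission
  imports Defs
begin

(* In a non-erasing root step D<lam x.t>(u, y.r) the variables x and y occur free, so their
   multiset types are nonempty and the (app) rule typing the redex makes no use of the dummy
   type of ch. Hence the derivation of the redex contains, for each axiom typing x in t, a
   matching derivation of u; substituting them yields derivations of D<{u/x}t>, one for each
   axiom typing y in r, and substituting those yields a derivation of the reduct. Every
   substituted axiom disappears, as do the (abs) rules of D<lam x.t> and the (app) rule of the
   redex, so the size strictly decreases. Closure under contexts holds because sizes add up. *)

section \<open>Environments\<close>

definition env_empty :: env where
  "env_empty = (\<lambda>_. {#})"

definition env_del :: "nat \<Rightarrow> env \<Rightarrow> env" where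
  "env_del k G = (\<lambda>i. if i < k then G i else G (Suc i))"

definition env_shift :: "nat \<Rightarrow> nat \<Rightarrow> env \<Rightarrow> env" where
  "env_shift d c G = (\<lambda>i. if i < c then G i else if i < c + d then {#} else G (i - d))"

lemma env_union_apply: "(G \<and>\<^sub>e D) i = G i + D i"
  by (simp add: env_union_def)

lemma env_empty_apply: "env_empty i = {#}"
  by (simp add: env_empty_def)

lemma env_cons_0 [simp]: "env_cons M G 0 = M"
  and env_cons_Suc [simp]: "env_cons M G (Suc j) = G j"
  by (simp_all add: env_cons_def)

interpretation env_union: comm_monoid env_union env_empty
  by standard (simp_all add: fun_eq_iff env_union_apply env_empty_apply add_ac)

lemmas env_union_ac = env_union.assoc env_union.commute env_union.left_commute

lemma env_cons_union: "env_cons M G \<and>\<^sub>e env_cons N D = env_cons (M + N) (G \<and>\<^sub>e D)"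
  by (simp add: fun_eq_iff env_union_apply env_cons_def split: nat.split)

lemma env_sum_Nil: "env_sum [] = env_empty"
  and env_sum_Cons: "env_sum (G # Gs) = G \<and>\<^sub>e env_sum Gs"
  by (simp_all add: env_sum_def env_empty_def env_union_def)

lemma env_shift_single: "env_shift d c (env_single x s) = env_single (if x < c then x else x + d) s"
  and env_shift_cons: "env_shift d (Suc c) (env_cons M G) = env_cons M (env_shift d c G)"
  and env_shift_union: "env_shift d c (G \<and>\<^sub>e D) = env_shift d c G \<and>\<^sub>e env_shift d c D"
  and env_shift_empty: "env_shift d c env_empty = env_empty"
  and env_shift_1_0: "env_shift 1 0 G = env_cons {#} G"
  by (auto simp: fun_eq_iff env_union_apply env_empty_def env_shift_def env_single_def env_cons_def Suc_diff_le split: nat.split)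

lemma env_del_single:
    "env_del k (env_single x s) = (if x = k then env_empty else env_single (if x < k then x else x - 1) s)"
  and env_del_cons_Suc: "env_del (Suc k) (env_cons M G) = env_cons M (env_del k G)"
  and env_del_cons_0: "env_del 0 (env_cons M G) = G"
  and env_del_union: "env_del k (G \<and>\<^sub>e D) = env_del k G \<and>\<^sub>e env_del k D"
  and env_del_empty: "env_del k env_empty = env_empty"
  by (auto simp: fun_eq_iff env_union_apply env_empty_def env_del_def env_single_def env_cons_def split: nat.split)

lemma shift_shift: "shift a c (shift b c u) = shift (a + b) c u"
  by (induction u arbitrary: c) auto

lemma shift_0: "shift 0 c u = u"
  by (induction u arbitrary: c) auto

lemma ch_nonempty: "ch M M' \<Longrightarrow> M' \<noteq> {#}"
  and ch_eq: "ch M M' \<Longrightarrow> M \<noteq> {#} \<Longrightarrow> M' = M"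
  by (auto simp: ch_def)

section \<open>Derivations with binary multiset rules\<close>

(* System \<inter>J with the list-indexed rule (many) replaced by binary rules for multisets,
   which have a usable induction principle. Unlike has_mty, mtyping also types a term with
   the empty multiset; (app) never uses this, since ch only produces nonempty multisets. *)
inductive typing :: "env \<Rightarrow> trm \<Rightarrow> ty \<Rightarrow> nat \<Rightarrow> bool"
  and mtyping :: "env \<Rightarrow> trm \<Rightarrow> ty multiset \<Rightarrow> nat \<Rightarrow> bool" where
  var: "typing (env_single x s) (Var x) s 1"
| abs: "typing (env_cons M G) t s n \<Longrightarrow> typing G (Lam t) (Arr M s) (Suc n)"
| app: "ch (mset (map (\<lambda>p. Arr (fst p) (snd p)) ps)) A \<Longrightarrow> mtyping G t A n1 \<Longrightarrow>
        ch (sum_list (map fst ps)) B \<Longrightarrow> mtyping D u B n2 \<Longrightarrow>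
        typing (env_cons (mset (map snd ps)) L) r s n3 \<Longrightarrow>
        typing (G \<and>\<^sub>e D \<and>\<^sub>e L) (App t u r) s (Suc (n1 + n2 + n3))"
| mnil: "mtyping env_empty t {#} 0"
| mcons: "typing G t s n \<Longrightarrow> mtyping D t A m \<Longrightarrow> mtyping (G \<and>\<^sub>e D) t (add_mset s A) (n + m)"

inductive_cases typing_LamE: "typing G (Lam t) s n"
inductive_cases typing_AppE: "typing G (App t u r) s n"
inductive_cases mtyping_emptyE: "mtyping D t {#} m"

lemma mtyping_of_list:
  "\<forall>i<length xs. typing (fst (xs ! i)) t (fst (snd (xs ! i))) (snd (snd (xs ! i))) \<Longrightarrow>
   mtyping (env_sum (map fst xs)) t (mset (map (\<lambda>x. fst (snd x)) xs)) (sum_list (map (\<lambda>x. snd (snd x)) xs))"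
proof (induction xs)
  case Nil
  then show ?case by (simp add: env_sum_Nil mnil)
next
  case (Cons x xs)
  then have "typing (fst x) t (fst (snd x)) (snd (snd x))" by force
  moreover from Cons have "mtyping (env_sum (map fst xs)) t (mset (map (\<lambda>x. fst (snd x)) xs))
      (sum_list (map (\<lambda>x. snd (snd x)) xs))" by force
  ultimately show ?case by (simp add: env_sum_Cons mcons)
qed

lemma has_ty_imp_typing:
  shows "has_ty G t s n \<Longrightarrow> typing G t s n"
    and "has_mty G t A n \<Longrightarrow> mtyping G t A n"
proof (induction rule: has_ty_has_mty.inducts)
  case (var x s)
  show ?case by (rule typing_mtyping.var)
next
  case (many xs t)
  then show ?case using mtyping_of_list[of xs t] by blast
qed (blast intro: typing_mtyping.intros)+

lemma has_mty_add_mset: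
  assumes "has_ty G t s n" and "has_mty D t A m"
  shows "has_mty (G \<and>\<^sub>e D) t (add_mset s A) (n + m)"
  using assms(2)
proof (cases rule: has_mty.cases)
  case (many xs)
  have "has_mty (env_sum (map fst ((G, s, n) # xs))) t (mset (map (\<lambda>x. fst (snd x)) ((G, s, n) # xs)))
      (sum_list (map (\<lambda>x. snd (snd x)) ((G, s, n) # xs)))"
    by (rule has_ty_has_mty.many) (use many assms(1) in \<open>auto simp: nth_Cons split: nat.split\<close>)
  then show ?thesis using many by (simp add: env_sum_Cons)
qed

lemma has_mty_single: "has_ty G t s n \<Longrightarrow> has_mty G t {#s#} n"
  using has_ty_has_mty.many[of "[(G, s, n)]" t] by (simp add: env_sum_Cons env_sum_Nil)

lemma typing_imp_has_ty:
  shows "typing G t s n \<Longrightarrow> has_ty G t s n"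
    and "mtyping G t A n \<Longrightarrow> A \<noteq> {#} \<Longrightarrow> has_mty G t A n"
proof (induction rule: typing_mtyping.inducts)
  case (mcons G t s n D A m)
  show ?case
  proof (cases "A = {#}")
    case True
    with mcons.hyps(2) have "D = env_empty" "m = 0" by (auto elim: mtyping_emptyE)
    with True show ?thesis using has_mty_single[OF mcons.IH(1)] by simp
  next
    case False
    then show ?thesis using has_mty_add_mset mcons.IH by blast
  qed
qed (blast intro: has_ty_has_mty.intros dest: ch_nonempty)+

lemma typing_iff_has_ty: "typing G t s n \<longleftrightarrow> has_ty G t s n"
  using has_ty_imp_typing(1) typing_imp_has_ty(1) by blast

lemma mtyping_remove:
  assumes "mtyping D t A m" and "s \<in># A"
  shows "\<exists>G1 D2 n1 m2. typing G1 t s n1 \<and> mtyping D2 t (A - {#s#}) m2 \<and> D = G1 \<and>\<^sub>e D2 \<and> m = n1 + m2"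
  using assms
proof (induction "size A" arbitrary: A D m rule: less_induct)
  case less
  from less.prems(1) show ?case
  proof (cases rule: mtyping.cases)
    case mnil
    then show ?thesis using less.prems by simp
  next
    case (mcons G s' n D' A' m')
    show ?thesis
    proof (cases "s' = s")
      case True
      then show ?thesis using mcons by auto
    next
      case False
      then have "s \<in># A'" using mcons less.prems by auto
      then obtain G1 D2 n1 m2 where IH: "typing G1 t s n1" "mtyping D2 t (A' - {#s#}) m2"
          "D' = G1 \<and>\<^sub>e D2" "m' = n1 + m2"
        using less.hyps[of A' D' m'] mcons by auto
      have "mtyping (G \<and>\<^sub>e D2) t (add_mset s' (A' - {#s#})) (n + m2)"
        using IH mcons by (auto intro: typing_mtyping.mcons)
      moreover have "add_mset s' (A' - {#s#}) = A - {#s#}"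
        using mcons \<open>s \<in># A'\<close> False by auto
      ultimately show ?thesis
        using IH mcons by (metis env_union.left_commute add.left_commute)
    qed
  qed
qed

lemma mtyping_union_split:
  "mtyping D t (A + B) m \<Longrightarrow>
   \<exists>D1 D2 m1 m2. mtyping D1 t A m1 \<and> mtyping D2 t B m2 \<and> D = D1 \<and>\<^sub>e D2 \<and> m = m1 + m2"
proof (induction A arbitrary: D m)
  case empty
  then show ?case using mnil by fastforce
next
  case (add s A)
  from mtyping_remove[OF add.prems, of s] obtain G1 D2 n1 m2 where
    s: "typing G1 t s n1" and rest: "mtyping D2 t (A + B) m2" and "D = G1 \<and>\<^sub>e D2" "m = n1 + m2"
    by auto
  from add.IH[OF rest] obtain E1 E2 k1 k2 where
    "mtyping E1 t A k1" "mtyping E2 t B k2" "D2 = E1 \<and>\<^sub>e E2" "m2 = k1 + k2"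
    by auto
  moreover from s \<open>mtyping E1 t A k1\<close> have "mtyping (G1 \<and>\<^sub>e E1) t (add_mset s A) (n1 + k1)"
    by (rule mcons)
  ultimately show ?case
    using \<open>D = G1 \<and>\<^sub>e D2\<close> \<open>m = n1 + m2\<close> by (metis env_union.assoc add.assoc)
qed

lemma mtyping_singleD: "mtyping D t {#s#} m \<Longrightarrow> typing D t s m"
  using mtyping_remove[of D t "{#s#}" m s] by (auto elim: mtyping_emptyE)

section \<open>Weakening and substitution\<close>

lemma typing_shift:
  shows "typing G t s n \<Longrightarrow> typing (env_shift d c G) (shift d c t) s n"
    and "mtyping G t A n \<Longrightarrow> mtyping (env_shift d c G) (shift d c t) A n"
proof (induction arbitrary: c and c rule: typing_mtyping.inducts)
  case (var x s)
  show ?case unfolding env_shift_single shift.simps by (rule typing_mtyping.var)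
next
  case (abs M G t s n)
  then show ?case using abs.IH[of "Suc c"] by (auto simp: env_shift_cons intro: typing_mtyping.abs)
next
  case (app ps A G t n1 B D u n2 L r s n3)
  show ?case using app.IH(3)[of "Suc c"] app.IH(1,2)[of c] app.hyps
    by (auto simp: env_shift_cons env_shift_union intro: typing_mtyping.app)
qed (auto simp: env_shift_union env_shift_empty intro: typing_mtyping.intros)

lemma mtyping_shift_1_0: "mtyping G t A n \<Longrightarrow> mtyping (env_cons {#} G) (shift 1 0 t) A n"
  using typing_shift(2)[of G t A n 1 0] by (simp only: env_shift_1_0)

lemma typing_loose_nonempty:
  shows "typing G t s n \<Longrightarrow> loose k t \<Longrightarrow> G k \<noteq> {#}"
    and "mtyping G t A n \<Longrightarrow> A \<noteq> {#} \<Longrightarrow> loose k t \<Longrightarrow> G k \<noteq> {#}"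
proof (induction arbitrary: k and k rule: typing_mtyping.inducts)
  case (abs M G t s n)
  then show ?case using abs.IH[of "Suc k"] by simp
next
  case (app ps A G t n1 B D u n2 L r s n3)
  have "A \<noteq> {#}" "B \<noteq> {#}" using app.hyps(1,3) by (auto dest: ch_nonempty)
  then show ?case
    using app.prems app.IH(1)[of k] app.IH(2)[of k] app.IH(3)[of "Suc k"] by (auto simp: env_union_apply)
qed (auto simp: env_single_def env_union_apply)

lemma typing_subst_Var:
  assumes "mtyping E v (env_single x s k) m"
  shows "\<exists>n'. typing (env_del k (env_single x s) \<and>\<^sub>e E) (subst (Var x) k v) s n' \<and>
    n' + size (env_single x s k) = 1 + m"
proof (cases "x = k")
  case True
  then have "env_single x s k = {#s#}" by (simp add: env_single_def)
  with assms have "typing E v s m" by (simp add: mtyping_singleD)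
  with True \<open>env_single x s k = {#s#}\<close> show ?thesis by (simp add: env_del_single)
next
  case False
  let ?x = "if x < k then x else x - 1"
  from False have "env_del k (env_single x s) = env_single ?x s" "subst (Var x) k v = Var ?x"
    by (simp_all add: env_del_single)
  then have "typing (env_del k (env_single x s)) (subst (Var x) k v) s 1"
    by (simp only:) (rule typing_mtyping.var)
  moreover from False assms have "E = env_empty" "m = 0"
    by (auto simp: env_single_def elim: mtyping_emptyE)
  ultimately show ?thesis
    using False by (auto simp: env_single_def)
qed

lemma mtyping_env_union_split:
  "mtyping E v ((G \<and>\<^sub>e D) k) m \<Longrightarrow>
   \<exists>E1 E2 m1 m2. mtyping E1 v (G k) m1 \<and> mtyping E2 v (D k) m2 \<and> E = E1 \<and>\<^sub>e E2 \<and> m = m1 + m2"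
  using mtyping_union_split by (simp add: env_union_apply[of _ _ k])

(* Every one of the size (G k) axioms typing the variable k is replaced by a derivation
   of v taken from the given multiset derivation, which accounts for the size equation. *)
lemma typing_subst:
  shows "typing G t s n \<Longrightarrow> mtyping E v (G k) m \<Longrightarrow>
      \<exists>n'. typing (env_del k G \<and>\<^sub>e E) (subst t k v) s n' \<and> n' + size (G k) = n + m"
    and "mtyping G t A n \<Longrightarrow> mtyping E v (G k) m \<Longrightarrow>
      \<exists>n'. mtyping (env_del k G \<and>\<^sub>e E) (subst t k v) A n' \<and> n' + size (G k) = n + m"
proof (induction arbitrary: k E v m and k E v m rule: typing_mtyping.inducts)
  case (var x s)
  then show ?case by (rule typing_subst_Var)
next
  case (abs M G t s n)
  from mtyping_shift_1_0[OF abs.prems]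
  have "mtyping (env_cons {#} E) (shift 1 0 v) (env_cons M G (Suc k)) m"
    by simp
  from abs.IH[OF this] show ?case
    by (auto simp: env_del_cons_Suc env_cons_union intro: typing_mtyping.abs)
next
  case (app ps A G t n1 B D u n2 L r s n3)
  from app.prems obtain E12 E3 m12 m3 where
    "mtyping E12 v ((G \<and>\<^sub>e D) k) m12" and E3: "mtyping E3 v (L k) m3"
    and "E = E12 \<and>\<^sub>e E3" and "m = m12 + m3"
    by (blast dest: mtyping_env_union_split)
  then obtain E1 E2 m1 m2 where
    E1: "mtyping E1 v (G k) m1" and E2: "mtyping E2 v (D k) m2"
    and E: "E = E1 \<and>\<^sub>e E2 \<and>\<^sub>e E3" and m: "m = m1 + m2 + m3"
    by (blast dest: mtyping_env_union_split)
  from app.IH(1)[OF E1] obtain a1 where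
    a1: "mtyping (env_del k G \<and>\<^sub>e E1) (subst t k v) A a1" "a1 + size (G k) = n1 + m1" by blast
  from app.IH(2)[OF E2] obtain a2 where
    a2: "mtyping (env_del k D \<and>\<^sub>e E2) (subst u k v) B a2" "a2 + size (D k) = n2 + m2" by blast
  from mtyping_shift_1_0[OF E3]
  have "mtyping (env_cons {#} E3) (shift 1 0 v) (env_cons (mset (map snd ps)) L (Suc k)) m3"
    by simp
  from app.IH(3)[OF this] obtain a3 where
    a3: "typing (env_cons (mset (map snd ps)) (env_del k L \<and>\<^sub>e E3)) (subst r (Suc k) (shift 1 0 v)) s a3"
      "a3 + size (L k) = n3 + m3"
    by (auto simp: env_del_cons_Suc env_cons_union)
  have "typing ((env_del k G \<and>\<^sub>e E1) \<and>\<^sub>e (env_del k D \<and>\<^sub>e E2) \<and>\<^sub>e (env_del k L \<and>\<^sub>e E3))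
      (App (subst t k v) (subst u k v) (subst r (Suc k) (shift 1 0 v))) s (Suc (a1 + a2 + a3))"
    by (rule typing_mtyping.app[OF app.hyps(1) a1(1) app.hyps(3) a2(1) a3(1)])
  moreover have "(env_del k G \<and>\<^sub>e E1) \<and>\<^sub>e (env_del k D \<and>\<^sub>e E2) \<and>\<^sub>e (env_del k L \<and>\<^sub>e E3)
      = env_del k (G \<and>\<^sub>e D \<and>\<^sub>e L) \<and>\<^sub>e E"
    using E by (simp add: env_del_union env_union_ac)
  ultimately show ?case
    using m a1(2) a2(2) a3(2) by (auto simp: env_union_apply[of _ _ k])
next
  case (mnil t)
  then have "E = env_empty" "m = 0"
    by (auto simp: env_empty_apply elim: mtyping_emptyE)
  then show ?case
    using typing_mtyping.mnil[of "subst t k v"] by (simp add: env_del_empty env_empty_apply[of k])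
next
  case (mcons G t s n D A m')
  from mcons.prems obtain E1 E2 m1 m2 where
    E1: "mtyping E1 v (G k) m1" and E2: "mtyping E2 v (D k) m2" and E: "E = E1 \<and>\<^sub>e E2"
    and m: "m = m1 + m2"
    by (blast dest: mtyping_env_union_split)
  from mcons.IH(1)[OF E1] obtain a1 where
    a1: "typing (env_del k G \<and>\<^sub>e E1) (subst t k v) s a1" "a1 + size (G k) = n + m1" by blast
  from mcons.IH(2)[OF E2] obtain a2 where
    a2: "mtyping (env_del k D \<and>\<^sub>e E2) (subst t k v) A a2" "a2 + size (D k) = m' + m2" by blast
  have "mtyping ((env_del k G \<and>\<^sub>e E1) \<and>\<^sub>e (env_del k D \<and>\<^sub>e E2)) (subst t k v) (add_mset s A) (a1 + a2)"
    by (rule typing_mtyping.mcons[OF a1(1) a2(1)])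
  moreover have "(env_del k G \<and>\<^sub>e E1) \<and>\<^sub>e (env_del k D \<and>\<^sub>e E2) = env_del k (G \<and>\<^sub>e D) \<and>\<^sub>e E"
    using E by (simp add: env_del_union env_union_ac)
  ultimately show ?case
    using m a1(2) a2(2) by (auto simp: env_union_apply[of _ _ k])
qed

lemma typing_plug_Lam_nonempty:
  "typing G (plug D (Lam t)) (Arr M \<tau>) n \<Longrightarrow> loose 0 t \<Longrightarrow> M \<noteq> {#}"
proof (induction D arbitrary: G n)
  case Hole
  then obtain n0 where "typing (env_cons M G) t \<tau> n0"
    by (auto elim: typing_LamE)
  from typing_loose_nonempty(1)[OF this \<open>loose 0 t\<close>] show ?case
    by simp
next
  case (DApp t1 u1 D)
  from DApp.prems(1) obtain G' n' where "typing G' (plug D (Lam t)) (Arr M \<tau>) n'"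
    by (auto elim: typing_AppE)
  with DApp show ?case
    by blast
qed

lemma typing_plug_beta:
  "typing G (plug D (Lam t)) (Arr M \<tau>) n \<Longrightarrow> mtyping E v M m \<Longrightarrow>
   \<exists>n'. typing (G \<and>\<^sub>e E) (plug D (subst t 0 (shift (depth D) 0 v))) \<tau> n' \<and> n' + 1 + size M = n + m"
proof (induction D arbitrary: G E v n m)
  case Hole
  from Hole.prems(1) obtain n0 where "n = Suc n0" and body: "typing (env_cons M G) t \<tau> n0"
    by (auto elim: typing_LamE)
  from Hole.prems(2) have "mtyping E v (env_cons M G 0) m"
    by simp
  from typing_subst(1)[OF body this] obtain n' where
    "typing (G \<and>\<^sub>e E) (subst t 0 v) \<tau> n'" "n' + size M = n0 + m"
    by (auto simp: env_del_cons_0)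
  with \<open>n = Suc n0\<close> show ?case
    by (auto simp: shift_0)
next
  case (DApp t1 u1 D)
  from DApp.prems(1) obtain ps A G1 n1 B G2 n2 L n3 where
    hyps: "ch (mset (map (\<lambda>p. Arr (fst p) (snd p)) ps)) A" "mtyping G1 t1 A n1"
      "ch (sum_list (map fst ps)) B" "mtyping G2 u1 B n2"
    and body: "typing (env_cons (mset (map snd ps)) L) (plug D (Lam t)) (Arr M \<tau>) n3"
    and "G = G1 \<and>\<^sub>e G2 \<and>\<^sub>e L" "n = Suc (n1 + n2 + n3)"
    by (auto elim: typing_AppE)
  from DApp.IH[OF body mtyping_shift_1_0[OF DApp.prems(2)]] obtain n' where
    "typing (env_cons (mset (map snd ps)) (L \<and>\<^sub>e E)) (plug D (subst t 0 (shift (Suc (depth D)) 0 v))) \<tau> n'"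
    "n' + 1 + size M = n3 + m"
    by (auto simp: env_cons_union shift_shift)
  with typing_mtyping.app[OF hyps] show ?case
    using \<open>G = _\<close> \<open>n = _\<close> by (fastforce simp: env_union_ac)
qed

lemma mtyping_plug_beta:
  "mtyping G (plug D (Lam t)) (mset (map (\<lambda>p. Arr (fst p) (snd p)) ps)) n \<Longrightarrow>
   mtyping E v (sum_list (map fst ps)) m \<Longrightarrow>
   \<exists>n'. mtyping (G \<and>\<^sub>e E) (plug D (subst t 0 (shift (depth D) 0 v))) (mset (map snd ps)) n' \<and>
     n' + length ps + size (sum_list (map fst ps)) = n + m"
proof (induction ps arbitrary: G E n m)
  case Nil
  then show ?case by (auto elim!: mtyping_emptyE simp: typing_mtyping.mnil)
next
  case (Cons p ps)
  obtain M \<tau> where p: "p = (M, \<tau>)" by (cases p)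
  from Cons.prems(1) p obtain G1 G2 n1 n2 where
    hd: "typing G1 (plug D (Lam t)) (Arr M \<tau>) n1"
    and tl: "mtyping G2 (plug D (Lam t)) (mset (map (\<lambda>p. Arr (fst p) (snd p)) ps)) n2"
    and "G = G1 \<and>\<^sub>e G2" "n = n1 + n2"
    using mtyping_remove[OF Cons.prems(1), of "Arr M \<tau>"] by auto
  from Cons.prems(2) p have "mtyping E v (M + sum_list (map fst ps)) m"
    by simp
  then obtain E1 E2 m1 m2 where
    E1: "mtyping E1 v M m1" and E2: "mtyping E2 v (sum_list (map fst ps)) m2"
    and "E = E1 \<and>\<^sub>e E2" "m = m1 + m2"
    by (blast dest: mtyping_union_split)
  from typing_plug_beta[OF hd E1] obtain k1 where
    "typing (G1 \<and>\<^sub>e E1) (plug D (subst t 0 (shift (depth D) 0 v))) \<tau> k1" "k1 + 1 + size M = n1 + m1"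
    by auto
  moreover from Cons.IH[OF tl E2] obtain k2 where
    "mtyping (G2 \<and>\<^sub>e E2) (plug D (subst t 0 (shift (depth D) 0 v))) (mset (map snd ps)) k2"
    "k2 + length ps + size (sum_list (map fst ps)) = n2 + m2"
    by auto
  ultimately show ?case
    using p \<open>G = _\<close> \<open>n = _\<close> \<open>E = _\<close> \<open>m = _\<close>
    by (auto simp: env_union_ac dest: typing_mtyping.mcons intro!: exI[of _ "k1 + k2"])
qed

section \<open>Subject reduction\<close>

definition shrinks_typings :: "trm \<Rightarrow> trm \<Rightarrow> bool" where
  "shrinks_typings t t' \<longleftrightarrow> (\<forall>G s n. typing G t s n \<longrightarrow> (\<exists>n' < n. typing G t' s n'))"

lemma mtyping_shrinks:
  assumes "mtyping G t A n" and "shrinks_typings t t'"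
  shows "\<exists>n' \<le> n. mtyping G t' A n' \<and> (A \<noteq> {#} \<longrightarrow> n' < n)"
  using assms
proof (induction rule: typing_mtyping.inducts(2)[where ?P1.0 = "\<lambda>_ _ _ _. True"])
  case (mnil t)
  then show ?case using typing_mtyping.mnil by blast
next
  case (mcons G t s n D A m)
  obtain a where "a < n" "typing G t' s a"
    using mcons.hyps(1) mcons.prems unfolding shrinks_typings_def by blast
  moreover from mcons.IH[OF mcons.prems] obtain b where "b \<le> m" "mtyping D t' A b"
    by blast
  ultimately show ?case
    by (auto intro!: exI[of _ "a + b"] typing_mtyping.mcons)
qed simp_all

lemma shrinks_typings_Lam:
  assumes "shrinks_typings t t'"
  shows "shrinks_typings (Lam t) (Lam t')"
  unfolding shrinks_typings_def
proof (intro allI impI)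
  fix G s n
  assume "typing G (Lam t) s n"
  then obtain M s0 n0 where "s = Arr M s0" "n = Suc n0" and body: "typing (env_cons M G) t s0 n0"
    by (auto elim: typing_LamE)
  from body assms obtain n' where "n' < n0" "typing (env_cons M G) t' s0 n'"
    unfolding shrinks_typings_def by blast
  with \<open>s = Arr M s0\<close> \<open>n = Suc n0\<close> show "\<exists>n' < n. typing G (Lam t') s n'"
    by (auto intro: typing_mtyping.abs)
qed

lemma shrinks_typings_App1:
  assumes "shrinks_typings t t'"
  shows "shrinks_typings (App t u r) (App t' u r)"
  unfolding shrinks_typings_def
proof (intro allI impI)
  fix G s n
  assume "typing G (App t u r) s n"
  then obtain ps A G1 n1 B G2 n2 L n3 where
    chA: "ch (mset (map (\<lambda>p. Arr (fst p) (snd p)) ps)) A" and fn: "mtyping G1 t A n1"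
    and hyps: "ch (sum_list (map fst ps)) B" "mtyping G2 u B n2"
      "typing (env_cons (mset (map snd ps)) L) r s n3"
    and "G = G1 \<and>\<^sub>e G2 \<and>\<^sub>e L" "n = Suc (n1 + n2 + n3)"
    by (auto elim: typing_AppE)
  moreover obtain a where "a < n1" "mtyping G1 t' A a"
    using mtyping_shrinks[OF fn assms] ch_nonempty[OF chA] by auto
  ultimately have "typing G (App t' u r) s (Suc (a + n2 + n3))" "Suc (a + n2 + n3) < n"
    using typing_mtyping.app[OF chA \<open>mtyping G1 t' A a\<close> hyps] by auto
  then show "\<exists>n' < n. typing G (App t' u r) s n'"
    by blast
qed

lemma shrinks_typings_App2:
  assumes "shrinks_typings u u'"
  shows "shrinks_typings (App t u r) (App t u' r)"
  unfolding shrinks_typings_def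
proof (intro allI impI)
  fix G s n
  assume "typing G (App t u r) s n"
  then obtain ps A G1 n1 B G2 n2 L n3 where
    hyps: "ch (mset (map (\<lambda>p. Arr (fst p) (snd p)) ps)) A" "mtyping G1 t A n1"
    and chB: "ch (sum_list (map fst ps)) B" and arg: "mtyping G2 u B n2"
    and body: "typing (env_cons (mset (map snd ps)) L) r s n3"
    and "G = G1 \<and>\<^sub>e G2 \<and>\<^sub>e L" "n = Suc (n1 + n2 + n3)"
    by (auto elim: typing_AppE)
  moreover obtain a where "a < n2" "mtyping G2 u' B a"
    using mtyping_shrinks[OF arg assms] ch_nonempty[OF chB] by auto
  ultimately have "typing G (App t u' r) s (Suc (n1 + a + n3))" "Suc (n1 + a + n3) < n"
    using typing_mtyping.app[OF hyps chB \<open>mtyping G2 u' B a\<close> body] by auto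
  then show "\<exists>n' < n. typing G (App t u' r) s n'"
    by blast
qed

lemma shrinks_typings_App3:
  assumes "shrinks_typings r r'"
  shows "shrinks_typings (App t u r) (App t u r')"
  unfolding shrinks_typings_def
proof (intro allI impI)
  fix G s n
  assume "typing G (App t u r) s n"
  then obtain ps A G1 n1 B G2 n2 L n3 where
    hyps: "ch (mset (map (\<lambda>p. Arr (fst p) (snd p)) ps)) A" "mtyping G1 t A n1"
      "ch (sum_list (map fst ps)) B" "mtyping G2 u B n2"
    and body: "typing (env_cons (mset (map snd ps)) L) r s n3"
    and "G = G1 \<and>\<^sub>e G2 \<and>\<^sub>e L" "n = Suc (n1 + n2 + n3)"
    by (auto elim: typing_AppE)
  moreover obtain a where "a < n3" "typing (env_cons (mset (map snd ps)) L) r' s a"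
    using body assms unfolding shrinks_typings_def by blast
  ultimately have "typing G (App t u r') s (Suc (n1 + n2 + a))" "Suc (n1 + n2 + a) < n"
    using typing_mtyping.app[OF hyps \<open>typing _ r' s a\<close>] by auto
  then show "\<exists>n' < n. typing G (App t u r') s n'"
    by blast
qed

lemma shrinks_typings_root:
  assumes "loose 0 t" and "loose 0 r"
  shows "shrinks_typings (App (plug D (Lam t)) u r) (subst r 0 (plug D (subst t 0 (shift (depth D) 0 u))))"
  unfolding shrinks_typings_def
proof (intro allI impI)
  fix G s n
  let ?b = "plug D (subst t 0 (shift (depth D) 0 u))"
  assume "typing G (App (plug D (Lam t)) u r) s n"
  then obtain ps A G1 n1 B G2 n2 L n3 where
    chA: "ch (mset (map (\<lambda>p. Arr (fst p) (snd p)) ps)) A" and fn: "mtyping G1 (plug D (Lam t)) A n1"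
    and chB: "ch (sum_list (map fst ps)) B" and arg: "mtyping G2 u B n2"
    and body: "typing (env_cons (mset (map snd ps)) L) r s n3"
    and G: "G = G1 \<and>\<^sub>e G2 \<and>\<^sub>e L" and n: "n = Suc (n1 + n2 + n3)"
    by (auto elim: typing_AppE)
  (* Non-erasingness makes ch the identity on both sides: y occurs in r, so ps is nonempty,
     and x occurs in t, so every argument multiset fst p is nonempty. *)
  from typing_loose_nonempty(1)[OF body \<open>loose 0 r\<close>] have "ps \<noteq> []"
    by auto
  with chA have A: "A = mset (map (\<lambda>p. Arr (fst p) (snd p)) ps)"
    by (simp add: ch_eq)
  have "fst p \<noteq> {#}" if "p \<in> set ps" for p
  proof -
    from that A have "Arr (fst p) (snd p) \<in># A" by auto
    with fn obtain G' n' where "typing G' (plug D (Lam t)) (Arr (fst p) (snd p)) n'"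
      using mtyping_remove by blast
    then show ?thesis using typing_plug_Lam_nonempty \<open>loose 0 t\<close> by blast
  qed
  with \<open>ps \<noteq> []\<close> have "sum_list (map fst ps) \<noteq> {#}"
    by (cases ps) auto
  with chB have B: "B = sum_list (map fst ps)"
    by (simp add: ch_eq)
  from mtyping_plug_beta[of G1 D t ps n1 G2 u n2] fn arg A B obtain k where
    k: "mtyping (G1 \<and>\<^sub>e G2) ?b (env_cons (mset (map snd ps)) L 0) k"
    and "k + length ps + size B = n1 + n2"
    by auto
  from typing_subst(1)[OF body k] obtain k' where
    "typing (L \<and>\<^sub>e (G1 \<and>\<^sub>e G2)) (subst r 0 ?b) s k'" and "k' + length ps = n3 + k"
    by (auto simp: env_del_cons_0)
  moreover have "L \<and>\<^sub>e (G1 \<and>\<^sub>e G2) = G"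
    using G by (simp add: env_union_ac)
  moreover have "k' < n"
    using \<open>k' + length ps = n3 + k\<close> \<open>k + length ps + size B = n1 + n2\<close> n by linarith
  ultimately show "\<exists>n' < n. typing G (subst r 0 ?b) s n'"
    by blast
qed

lemma ne_step_shrinks_typings: "ne_step t t' \<Longrightarrow> shrinks_typings t t'"
  by (induction rule: ne_step.induct)
    (simp_all add: shrinks_typings_root shrinks_typings_Lam
      shrinks_typings_App1 shrinks_typings_App2 shrinks_typings_App3)

theorem mainTheorem8:
  assumes "has_ty \<Gamma> t1 \<sigma> n1"
    and "ne_step t1 t2"
  shows "\<exists>n2 < n1. has_ty \<Gamma> t2 \<sigma> n2"
  using ne_step_shrinks_typings[OF assms(2)] assms(1)
  unfolding shrinks_typings_def typing_iff_has_ty by blast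

end
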